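(* Consider line-point incidence pairs $(\ell,p)$, where $\ell$ is a non-vertical line in $\mathbb{R}^2$ and $p\in\ell$; such a pair is parametrized by the triple $(a,b,\kappa)\in\mathbb{R}^3$, where $p=(a,b)$ and $\kappa$ is the slope of $\ell$. For such a pair with parameters $(a,b,\kappa)$, let $\sigma_{\ell,p}\subset\mathbb{R}^3$ be the set of points $(x,y,w)\in\mathbb{R}^3$ satisfying $$\bigl(y-b-\kappa(x-a)\bigr)\bigl(y-b-w(x-a)\bigr)=2(w-\kappa)\quad\text{and}\quad w\neq\kappa.$$ Let $(\ell_1,p_1)$ and $(\ell_2,p_2)$ be two distinct such incidence pairs, let $\gamma=\sigma_{\ell_1,p_1}\cap\sigma_{\ell_2,p_2}$, and assume $\gamma$ is non-empty. If $(\ell,p)$ is an incidence pair (of the same kind) with $\sigma_{\ell,p}\supseteq\gamma$, then $(\ell,p)=(\ell_1,p_1)$ or $(\ell,p)=(\ell_2,p_2)$.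
   Context: The surface $\sigma_{\ell,p}$ is the locus of parameter triples $(x,y,w)$ of pairs $(\ell',p')$ ($p'=(x,y)$, $\ell'$ of slope $w$ through $p'$) such that the triangle with vertices $p$, $p'$, $\ell\cap\ell'$ has area $1$ with $\vec{op'}$ counterclockwise to $\vec{op}$, where $o=\ell\cap\ell'$. *)

theory Defs
  imports Main Complex_Main
begin

definition sigma :: "real \<times> real \<times> real \<Rightarrow> (real \<times> real \<times> real) set" where
  "sigma q = (case q of (a, b, k) \<Rightarrow>
     {(x, y, w). (y - b - k * (x - a)) * (y - b - w * (x - a)) = 2 * (w - k) \<and> w \<noteq> k})"

end

theory Submission
  imports Defs "HOL-Computational_Algebra.Polynomial" "HOL-Library.Quadratic_Discriminant"
begin

text \<open>
  Points of \<open>\<sigma>(a\<^sub>1,b\<^sub>1,k\<^sub>1)\<close> are described by two nonzero coordinates \<open>m, t\<close>, and in these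
  coordinates the equation of any other surface \<open>\<sigma>(a,b,k)\<close> becomes a quadratic in \<open>t\<close> whose
  coefficients are polynomials in \<open>m\<close>.  If the lines \<open>\<ell>\<^sub>1, \<ell>\<^sub>2\<close> are not parallel, then for large
  \<open>m\<close> the quadratic of \<open>\<sigma>(a\<^sub>2,b\<^sub>2,k\<^sub>2)\<close> has two admissible roots, so the quadratic of \<open>\<sigma>(a,b,k)\<close>
  must be proportional to it; comparing coefficients as polynomials in \<open>m\<close> leaves only the two
  given pairs.  If the lines are parallel there is a single admissible root \<open>t(m)\<close>, and the
  resulting polynomial identity in \<open>m\<close> is evaluated at a well-chosen point.  This needs \<open>p\<^sub>2 \<notin> \<ell>\<^sub>1\<close>
  (or symmetrically \<open>p\<^sub>1 \<notin> \<ell>\<^sub>2\<close>); when both fail the two surfaces are disjoint.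
\<close>

lemma eventually_poly_nonzero_at_top:
  fixes p :: "real poly"
  assumes "p \<noteq> 0"
  shows "eventually (\<lambda>x. poly p x \<noteq> 0) at_top"
  using filter_leD[OF at_top_le_at_infinity poly_eventually_not_zero[OF assms]] .

lemma poly_eq_0_if_eventually_zero:
  fixes p :: "real poly"
  assumes "eventually (\<lambda>x. poly p x = 0) at_top"
  shows "p = 0"
proof (rule ccontr)
  assume "p \<noteq> 0"
  with assms have "eventually (\<lambda>x::real. False) at_top"
    by (auto dest: eventually_conj[OF _ eventually_poly_nonzero_at_top] elim: eventually_mono)
  then show False by simp
qed

lemma eventually_poly_pos_at_top:
  fixes p :: "real poly"
  assumes "lead_coeff p > 0"
  shows "eventually (\<lambda>x. poly p x > 0) at_top"
  using poly_pinfty_gt_lc[OF assms] assms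
  by (auto simp: eventually_at_top_linorder intro: less_le_trans)

text \<open>The point of \<open>\<sigma>(a,b,k)\<close> whose \<open>p'\<close> lies at height \<open>2/m\<close> above \<open>\<ell>\<close> and whose line \<open>\<ell>'\<close>
  has slope \<open>k + t\<close>; the area condition then determines the abscissa of \<open>p'\<close>.\<close>

definition sigma_point :: "real \<Rightarrow> real \<Rightarrow> real \<Rightarrow> real \<Rightarrow> real \<Rightarrow> real \<times> real \<times> real" where
  "sigma_point a b k m t = (a + (2/(m*t) - m), b + k*(2/(m*t) - m) + 2/m, k + t)"

text \<open>With \<open>(d, r, e) = (a - a\<^sub>1, k\<^sub>1 - k, b - b\<^sub>1 - k\<^sub>1 (a - a\<^sub>1))\<close>, the position of \<open>(a,b,k)\<close> relative to
  \<open>(a\<^sub>1,b\<^sub>1,k\<^sub>1)\<close>, \<open>pullback d r e m t\<close> is \<open>m t\<close> times the equation of \<open>\<sigma>(a,b,k)\<close> evaluated at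
  \<open>sigma_point a\<^sub>1 b\<^sub>1 k\<^sub>1 m t\<close>.\<close>

definition pullback_coeff2 :: "real \<Rightarrow> real \<Rightarrow> real \<Rightarrow> real poly" where
  "pullback_coeff2 d r e = [:2*d, -(d*e + d^2*r), -(e + 2*d*r), -r:]"

definition pullback_coeff1 :: "real \<Rightarrow> real \<Rightarrow> real \<Rightarrow> real poly" where
  "pullback_coeff1 d r e = [:2*d*r - 2*e, e*(e + d*r), e*r:]"

definition pullback :: "real \<Rightarrow> real \<Rightarrow> real \<Rightarrow> real \<Rightarrow> real \<Rightarrow> real" where
  "pullback d r e m t =
     poly (pullback_coeff2 d r e) m * t^2 + poly (pullback_coeff1 d r e) m * t - 2*r*e"

lemma sigma_point_mem_sigma_iff:
  assumes "m \<noteq> 0" "t \<noteq> 0"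
  shows "sigma_point a1 b1 k1 m t \<in> sigma (a, b, k) \<longleftrightarrow>
    pullback (a - a1) (k1 - k) (b - b1 - k1*(a - a1)) m t = 0 \<and> k1 + t \<noteq> k"
proof -
  let ?x = "a1 + (2/(m*t) - m)" and ?y = "b1 + k1*(2/(m*t) - m) + 2/m"
  let ?E = "(?y - b - k*(?x - a)) * (?y - b - (k1 + t)*(?x - a)) - 2*((k1 + t) - k)"
  have "m*t*?E = pullback (a - a1) (k1 - k) (b - b1 - k1*(a - a1)) m t"
    using assms unfolding pullback_def pullback_coeff2_def pullback_coeff1_def
    by (simp add: field_simps power2_eq_square)
  then have "?E = 0 \<longleftrightarrow> pullback (a - a1) (k1 - k) (b - b1 - k1*(a - a1)) m t = 0"
    using assms by auto
  then show ?thesis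
    unfolding sigma_point_def sigma_def by auto
qed

lemma sigma_point_mem_own_sigma:
  assumes "m \<noteq> 0" "t \<noteq> 0"
  shows "sigma_point a b k m t \<in> sigma (a, b, k)"
  using assms by (simp add: sigma_point_mem_sigma_iff pullback_def pullback_coeff2_def pullback_coeff1_def)

lemma quadratic_common_roots_proportional:
  fixes a b c a' b' c' t1 t2 :: real
  assumes "t1 \<noteq> t2" "t1 \<noteq> 0" "t2 \<noteq> 0"
    and "a*t1^2 + b*t1 + c = 0" "a*t2^2 + b*t2 + c = 0"
    and "a'*t1^2 + b'*t1 + c' = 0" "a'*t2^2 + b'*t2 + c' = 0"
  shows "c*a' = c'*a \<and> c*b' = c'*b"
proof -
  have linear: "(c*a' - c'*a)*t + (c*b' - c'*b) = 0"
    if "t \<noteq> 0" "a*t^2 + b*t + c = 0" "a'*t^2 + b'*t + c' = 0" for t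
  proof -
    have "t*((c*a' - c'*a)*t + (c*b' - c'*b)) = c*(a'*t^2 + b'*t + c') - c'*(a*t^2 + b*t + c)"
      by (simp add: algebra_simps power2_eq_square)
    with that show ?thesis by simp
  qed
  have "(c*a' - c'*a)*(t1 - t2) = 0"
    using linear[of t1] linear[of t2] assms by (simp add: algebra_simps)
  with assms(1) have "c*a' = c'*a" by simp
  with linear[of t1] assms show ?thesis by simp
qed

lemma pullback_discriminant_lead_coeff:
  assumes "r \<noteq> 0" "e \<noteq> 0"
  shows "lead_coeff (smult (8*r*e) (pullback_coeff2 d r e) + (pullback_coeff1 d r e)^2) = (r*e)^2"
proof -
  have "degree (pullback_coeff1 d r e) = 2"
    using assms by (simp add: pullback_coeff1_def)
  then have "degree ((pullback_coeff1 d r e)^2) = 4"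
    using degree_power_eq[of "pullback_coeff1 d r e" 2] by fastforce
  moreover have "degree (smult (8*r*e) (pullback_coeff2 d r e)) \<le> 3"
    by (rule order_trans[OF degree_smult_le]) (simp add: pullback_coeff2_def)
  ultimately have "lead_coeff (smult (8*r*e) (pullback_coeff2 d r e) + (pullback_coeff1 d r e)^2)
      = lead_coeff ((pullback_coeff1 d r e)^2)"
    by (intro lead_coeff_add_le) simp
  also have "\<dots> = (r*e)^2"
    using assms by (simp add: lead_coeff_power pullback_coeff1_def mult.commute)
  finally show ?thesis .
qed

lemma pullback_at_excluded_slope:
  "pullback d r e m (-r) = -m*r*(e + (m + d)*r)^2"
  by (simp add: pullback_def pullback_coeff2_def pullback_coeff1_def power2_eq_square algebra_simps)

lemma eventually_two_admissible_roots:
  fixes d2 r2 e2 :: real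
  assumes "r2 \<noteq> 0" "e2 \<noteq> 0"
  shows "eventually (\<lambda>m. m \<noteq> 0 \<and> (\<exists>t1 t2. t1 \<noteq> t2 \<and>
    (\<forall>t\<in>{t1, t2}. t \<noteq> 0 \<and> t \<noteq> -r2 \<and> pullback d2 r2 e2 m t = 0))) at_top"
proof -
  let ?A2 = "pullback_coeff2 d2 r2 e2" and ?B2 = "pullback_coeff1 d2 r2 e2"
  let ?disc = "smult (8*r2*e2) ?A2 + ?B2^2"
  have "?A2 \<noteq> 0" "[:e2 + d2*r2, r2:] \<noteq> 0"
    using assms(1) by (simp_all add: pullback_coeff2_def)
  moreover have "lead_coeff ?disc > 0"
    unfolding pullback_discriminant_lead_coeff[OF assms(1,2)] using assms(1,2) by simp
  ultimately have "eventually (\<lambda>m. m > 0 \<and> poly ?A2 m \<noteq> 0 \<and> poly ?disc m > 0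
      \<and> poly [:e2 + d2*r2, r2:] m \<noteq> 0) at_top"
    by (intro eventually_conj eventually_gt_at_top eventually_poly_nonzero_at_top
        eventually_poly_pos_at_top)
  then show ?thesis
  proof (rule eventually_mono)
    fix m
    assume m: "m > 0 \<and> poly ?A2 m \<noteq> 0 \<and> poly ?disc m > 0 \<and> poly [:e2 + d2*r2, r2:] m \<noteq> 0"
    have "discrim (poly ?A2 m) (poly ?B2 m) (-2*r2*e2) = poly ?disc m"
      by (simp add: discrim_def mult_ac)
    with m obtain t1 t2 where "t1 \<noteq> t2"
      and "poly ?A2 m * t1^2 + poly ?B2 m * t1 + -2*r2*e2 = 0"
      and "poly ?A2 m * t2^2 + poly ?B2 m * t2 + -2*r2*e2 = 0"
      using discriminant_pos_ex[of "poly ?A2 m" "poly ?B2 m" "-2*r2*e2"] by auto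
    then have roots: "pullback d2 r2 e2 m t1 = 0" "pullback d2 r2 e2 m t2 = 0"
      by (simp_all add: pullback_def)
    have "pullback d2 r2 e2 m 0 \<noteq> 0"
      using assms(1,2) by (simp add: pullback_def)
    moreover have "pullback d2 r2 e2 m (-r2) \<noteq> 0"
      using m assms(1) unfolding pullback_at_excluded_slope by (simp add: algebra_simps)
    ultimately show "m \<noteq> 0 \<and> (\<exists>t1 t2. t1 \<noteq> t2 \<and>
        (\<forall>t\<in>{t1, t2}. t \<noteq> 0 \<and> t \<noteq> -r2 \<and> pullback d2 r2 e2 m t = 0))"
      using m roots \<open>t1 \<noteq> t2\<close> by (metis empty_iff insert_iff less_irrefl)
  qed
qed

lemma pullback_coeffs_proportional:
  fixes d r e d2 r2 e2 :: real
  assumes "r2 \<noteq> 0" "e2 \<noteq> 0"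
    and vanish: "\<And>m t. m \<noteq> 0 \<Longrightarrow> t \<noteq> 0 \<Longrightarrow> t \<noteq> -r2 \<Longrightarrow> pullback d2 r2 e2 m t = 0
      \<Longrightarrow> pullback d r e m t = 0"
  shows "smult (r2*e2) (pullback_coeff2 d r e) = smult (r*e) (pullback_coeff2 d2 r2 e2)
    \<and> smult (r2*e2) (pullback_coeff1 d r e) = smult (r*e) (pullback_coeff1 d2 r2 e2)"
proof -
  let ?A2 = "pullback_coeff2 d2 r2 e2" and ?B2 = "pullback_coeff1 d2 r2 e2"
  let ?A = "pullback_coeff2 d r e" and ?B = "pullback_coeff1 d r e"
  have "eventually (\<lambda>m. poly (smult (r2*e2) ?A - smult (r*e) ?A2) m = 0
      \<and> poly (smult (r2*e2) ?B - smult (r*e) ?B2) m = 0) at_top"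
    using eventually_two_admissible_roots[OF assms(1,2)]
  proof (rule eventually_mono)
    fix m
    assume "m \<noteq> 0 \<and> (\<exists>t1 t2. t1 \<noteq> t2 \<and>
      (\<forall>t\<in>{t1, t2}. t \<noteq> 0 \<and> t \<noteq> -r2 \<and> pullback d2 r2 e2 m t = 0))"
    then obtain t1 t2 where "m \<noteq> 0" "t1 \<noteq> t2"
      and roots: "\<forall>t\<in>{t1, t2}. t \<noteq> 0 \<and> t \<noteq> -r2 \<and> pullback d2 r2 e2 m t = 0"
      by blast
    then have "\<forall>t\<in>{t1, t2}. pullback d r e m t = 0"
      using vanish by blast
    with roots have "(-2*r2*e2) * poly ?A m = (-2*r*e) * poly ?A2 m
        \<and> (-2*r2*e2) * poly ?B m = (-2*r*e) * poly ?B2 m"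
      by (intro quadratic_common_roots_proportional[OF \<open>t1 \<noteq> t2\<close>]) (simp_all add: pullback_def)
    then show "poly (smult (r2*e2) ?A - smult (r*e) ?A2) m = 0
      \<and> poly (smult (r2*e2) ?B - smult (r*e) ?B2) m = 0"
      by simp
  qed
  then have "smult (r2*e2) ?A - smult (r*e) ?A2 = 0 \<and> smult (r2*e2) ?B - smult (r*e) ?B2 = 0"
    unfolding eventually_conj_iff by (blast intro: poly_eq_0_if_eventually_zero)
  then show ?thesis by simp
qed

lemma proportional_pullback_coeffs_cases:
  fixes d r e d2 r2 e2 :: real
  assumes "r2 \<noteq> 0" "e2 \<noteq> 0"
    and A: "smult (r2*e2) (pullback_coeff2 d r e) = smult (r*e) (pullback_coeff2 d2 r2 e2)"
    and B: "smult (r2*e2) (pullback_coeff1 d r e) = smult (r*e) (pullback_coeff1 d2 r2 e2)"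
  shows "(d, r, e) = (0, 0, 0) \<or> (d, r, e) = (d2, r2, e2)"
proof (cases "r*e = 0")
  case True
  then have "smult (r2*e2) (pullback_coeff2 d r e) = 0" using A by simp
  then have "pullback_coeff2 d r e = 0" using assms(1,2) by simp
  then show ?thesis by (auto simp: pullback_coeff2_def)
next
  case False
  have A': "r2*e2*(2*d) = r*e*(2*d2)" "r2*e2*(e + 2*d*r) = r*e*(e2 + 2*d2*r2)"
      "r2*e2*r = r*e*r2"
    using A by (simp_all add: pullback_coeff2_def algebra_simps)
  have B': "r2*e2*(2*d*r - 2*e) = r*e*(2*d2*r2 - 2*e2)"
    using B by (simp add: pullback_coeff1_def)
  have "r*r2*(e2 - e) = 0" using A'(3) by (simp add: algebra_simps)
  then have e: "e = e2" using False assms(1) by simp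
  define c where "c = r / r2"
  have r: "r = c*r2" using assms(1) by (simp add: c_def)
  have d: "d = c*d2" using A'(1) e r assms(1,2) by simp
  have "r2*e2*((1 - c)*(e2 - 2*c*d2*r2)) = 0"
    using A'(2) unfolding e d r by algebra
  moreover have "-2*r2*e2*((1 - c)*(e2 + c*d2*r2)) = 0"
    using B' unfolding e d r by algebra
  ultimately have "c = 1 \<or> (e2 - 2*c*d2*r2 = 0 \<and> e2 + c*d2*r2 = 0)"
    using assms(1,2) by auto
  then have "c = 1" using assms(2) by auto
  then show ?thesis using e d r by simp
qed

text \<open>For \<open>r\<^sub>2 = 0\<close> the quadratic \<open>A\<^sub>2(m) t\<^sup>2 + B\<^sub>2(m) t\<close> (coefficients \<open>pullback_coeff2/1 d\<^sub>2 0 e\<^sub>2\<close>)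
  has the single admissible root \<open>t = -B\<^sub>2(m)/A\<^sub>2(m)\<close>; the identity is \<open>A\<^sub>2(m)\<^sup>2 pullback d r e m t\<close>
  at that root.\<close>

lemma parallel_root_identity:
  fixes d r e d2 e2 :: real
  assumes "e2 \<noteq> 0"
    and vanish: "\<And>m t. m \<noteq> 0 \<Longrightarrow> t \<noteq> 0 \<Longrightarrow> pullback d2 0 e2 m t = 0 \<Longrightarrow> pullback d r e m t = 0"
  shows "pullback_coeff2 d r e * (pullback_coeff1 d2 0 e2)^2
    - pullback_coeff1 d r e * pullback_coeff1 d2 0 e2 * pullback_coeff2 d2 0 e2
    + smult (-2*r*e) ((pullback_coeff2 d2 0 e2)^2) = 0" (is "?P = 0")
proof (rule poly_eq_0_if_eventually_zero)
  let ?A2 = "pullback_coeff2 d2 0 e2" and ?B2 = "pullback_coeff1 d2 0 e2"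
  have "?A2 \<noteq> 0" "?B2 \<noteq> 0"
    using assms(1) by (simp_all add: pullback_coeff2_def pullback_coeff1_def)
  then have "eventually (\<lambda>m. m > 0 \<and> poly ?A2 m \<noteq> 0 \<and> poly ?B2 m \<noteq> 0) at_top"
    by (intro eventually_conj eventually_gt_at_top eventually_poly_nonzero_at_top)
  then show "eventually (\<lambda>m. poly ?P m = 0) at_top"
  proof (rule eventually_mono)
    fix m
    assume m: "m > 0 \<and> poly ?A2 m \<noteq> 0 \<and> poly ?B2 m \<noteq> 0"
    define t where "t = - poly ?B2 m / poly ?A2 m"
    have "t \<noteq> 0" using m by (simp add: t_def)
    moreover have "pullback d2 0 e2 m t = 0"
      using m by (simp add: pullback_def t_def power2_eq_square)
    ultimately have "pullback d r e m t = 0" using vanish m by simp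
    moreover have "poly ?A2 m ^ 2 * pullback d r e m t = poly ?P m"
      using m by (simp add: pullback_def t_def field_simps power2_eq_square)
    ultimately show "poly ?P m = 0" by simp
  qed
qed

lemma pullback_rigid_parallel:
  fixes d r e d2 e2 :: real
  assumes "e2 \<noteq> 0"
    and vanish: "\<And>m t. m \<noteq> 0 \<Longrightarrow> t \<noteq> 0 \<Longrightarrow> pullback d2 0 e2 m t = 0 \<Longrightarrow> pullback d r e m t = 0"
  shows "(d, r, e) = (0, 0, 0) \<or> (d, r, e) = (d2, 0, e2)"
proof -
  let ?A2 = "pullback_coeff2 d2 0 e2" and ?B2 = "pullback_coeff1 d2 0 e2"
  let ?A = "pullback_coeff2 d r e" and ?B = "pullback_coeff1 d r e"
  let ?P = "?A * ?B2^2 - ?B * ?B2 * ?A2 + smult (-2*r*e) (?A2^2)"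
  have "?B2 \<noteq> 0"
    using assms(1) by (simp add: pullback_coeff1_def)
  have P: "?P = 0" by (rule parallel_root_identity[OF assms])
  define m0 where "m0 = 2/e2" \<comment> \<open>the root of \<open>?B\<^sub>2\<close>, where \<open>?P\<close> reduces to its last term\<close>
  have B2_m0: "poly ?B2 m0 = 0" and A2_m0: "poly ?A2 m0 = -4/e2"
    using assms(1) by (simp_all add: m0_def pullback_coeff2_def pullback_coeff1_def field_simps)
  have "poly ?P m0 = -2*r*e*(4/e2)^2"
    using B2_m0 A2_m0 by (simp add: power2_eq_square)
  with P assms(1) have "r*e = 0" by simp
  with P have "?B2 * (?A * ?B2 - ?B * ?A2) = 0"
    by (simp add: algebra_simps power2_eq_square)
  with \<open>?B2 \<noteq> 0\<close> have AB: "?A * ?B2 = ?B * ?A2" by simp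
  then have "poly ?B m0 * poly ?A2 m0 = 0"
    using B2_m0 by (metis mult_zero_right poly_mult)
  then have "poly ?B m0 = 0"
    using A2_m0 assms(1) by simp
  show ?thesis
  proof (cases "e = 0")
    case True
    then have "?B = 0"
      using \<open>poly ?B m0 = 0\<close> by (simp add: pullback_coeff1_def)
    with AB \<open>?B2 \<noteq> 0\<close> have "?A = 0" by simp
    with True show ?thesis by (simp add: pullback_coeff2_def)
  next
    case False
    with \<open>r*e = 0\<close> have r: "r = 0" by simp
    with \<open>poly ?B m0 = 0\<close> have "e*(e - e2) = 0"
      using assms(1) by (simp add: m0_def pullback_coeff1_def field_simps algebra_simps)
    with False assms(1) have e: "e = e2" by simp
    with r have "?B = ?B2" by (simp add: pullback_coeff1_def)
    with AB \<open>?B2 \<noteq> 0\<close> have "?A = ?A2" by (simp add: mult.commute)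
    with r e show ?thesis by (simp add: pullback_coeff2_def)
  qed
qed

lemma pullback_rigid:
  fixes d r e d2 r2 e2 :: real
  assumes "e2 \<noteq> 0"
    and vanish: "\<And>m t. m \<noteq> 0 \<Longrightarrow> t \<noteq> 0 \<Longrightarrow> t \<noteq> -r2 \<Longrightarrow> pullback d2 r2 e2 m t = 0
      \<Longrightarrow> pullback d r e m t = 0"
  shows "(d, r, e) = (0, 0, 0) \<or> (d, r, e) = (d2, r2, e2)"
proof (cases "r2 = 0")
  case True
  with assms show ?thesis
    using pullback_rigid_parallel[of e2 d2 d r e] by auto
next
  case False
  with assms show ?thesis
    using pullback_coeffs_proportional[OF False assms(1) vanish]
    by (intro proportional_pullback_coeffs_cases) auto
qed

lemma sigma_inter_subset_imp_eq:
  assumes off_line: "b2 - b1 - k1*(a2 - a1) \<noteq> 0"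
    and sub: "sigma (a1, b1, k1) \<inter> sigma (a2, b2, k2) \<subseteq> sigma (a, b, k)"
  shows "(a, b, k) = (a1, b1, k1) \<or> (a, b, k) = (a2, b2, k2)"
proof -
  have "pullback (a - a1) (k1 - k) (b - b1 - k1*(a - a1)) m t = 0"
    if "m \<noteq> 0" "t \<noteq> 0" "t \<noteq> -(k1 - k2)"
      and "pullback (a2 - a1) (k1 - k2) (b2 - b1 - k1*(a2 - a1)) m t = 0" for m t
  proof -
    have "sigma_point a1 b1 k1 m t \<in> sigma (a2, b2, k2)"
      using sigma_point_mem_sigma_iff[OF that(1,2)] that(3,4) by auto
    with sub sigma_point_mem_own_sigma[OF that(1,2)]
    have "sigma_point a1 b1 k1 m t \<in> sigma (a, b, k)"
      by blast
    then show ?thesis using sigma_point_mem_sigma_iff[OF that(1,2)] by simp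
  qed
  then have "(a - a1, k1 - k, b - b1 - k1*(a - a1)) = (0, 0, 0)
    \<or> (a - a1, k1 - k, b - b1 - k1*(a - a1)) = (a2 - a1, k1 - k2, b2 - b1 - k1*(a2 - a1))"
    by (rule pullback_rigid[OF off_line])
  then show ?thesis by auto
qed

lemma sigma_inter_empty_common_point:
  assumes "k1 \<noteq> k2"
  shows "sigma (a, b, k1) \<inter> sigma (a, b, k2) = {}"
proof (intro equals0I, clarify)
  fix x y w
  assume "(x, y, w) \<in> sigma (a, b, k1)" "(x, y, w) \<in> sigma (a, b, k2)"
  then have eq1: "(y - b - k1*(x - a)) * (y - b - w*(x - a)) = 2*(w - k1)"
    and eq2: "(y - b - k2*(x - a)) * (y - b - w*(x - a)) = 2*(w - k2)"
    by (auto simp: sigma_def)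
  have "(k2 - k1)*((x - a)*(y - b - w*(x - a)) - 2) = 0" using eq1 eq2 by algebra
  then have uv: "(x - a)*(y - b - w*(x - a)) = 2" using assms by simp
  have "(y - b - w*(x - a))^2 = 0" using eq1 uv by algebra
  with uv show False by simp
qed

lemma sigma_inter_empty_common_line:
  assumes "a1 \<noteq> a2"
  shows "sigma (a1, b1, k) \<inter> sigma (a2, b1 + k*(a2 - a1), k) = {}"
proof (intro equals0I, clarify)
  fix x y w
  assume "(x, y, w) \<in> sigma (a1, b1, k)" "(x, y, w) \<in> sigma (a2, b1 + k*(a2 - a1), k)"
  then have "w \<noteq> k"
    and eq1: "(y - b1 - k*(x - a1)) * (y - b1 - w*(x - a1)) = 2*(w - k)"
    and eq2: "(y - b1 - k*(x - a1)) * (y - b1 - k*(a2 - a1) - w*(x - a2)) = 2*(w - k)"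
    by (auto simp: sigma_def algebra_simps)
  have "(y - b1 - k*(x - a1))*(k - w)*(a2 - a1) = 0" using eq1 eq2 by algebra
  then have "y - b1 - k*(x - a1) = 0" using \<open>w \<noteq> k\<close> assms by simp
  with eq1 \<open>w \<noteq> k\<close> show False by simp
qed

lemma sigma_inter_nonempty_imp_off_line:
  assumes "(a1, b1, k1) \<noteq> (a2, b2, k2)" "sigma (a1, b1, k1) \<inter> sigma (a2, b2, k2) \<noteq> {}"
  shows "b2 - b1 - k1*(a2 - a1) \<noteq> 0 \<or> b1 - b2 - k2*(a1 - a2) \<noteq> 0"
proof (rule ccontr)
  assume "\<not> ?thesis"
  then have on1: "b2 = b1 + k1*(a2 - a1)" and on2: "b1 = b2 + k2*(a1 - a2)" by simp_all
  show False
  proof (cases "k1 = k2")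
    case True
    with on1 assms(1) have "a1 \<noteq> a2" by auto
    with assms(2) on1 True show False
      using sigma_inter_empty_common_line[of a1 a2 b1 k1] by simp
  next
    case False
    from on1 on2 have "(k1 - k2)*(a2 - a1) = 0" by algebra
    with False on1 have "a1 = a2" "b1 = b2" by simp_all
    with assms(2) False show False
      using sigma_inter_empty_common_point[OF False, of a1 b1] by simp
  qed
qed

theorem lemma1:
  fixes q1 q2 q :: "real \<times> real \<times> real"
  assumes "q1 \<noteq> q2"
    and "sigma q1 \<inter> sigma q2 \<noteq> {}"
    and "sigma q1 \<inter> sigma q2 \<subseteq> sigma q"
  shows "q = q1 \<or> q = q2"
proof -
  obtain a1 b1 k1 a2 b2 k2 a b k
    where q: "q1 = (a1, b1, k1)" "q2 = (a2, b2, k2)" "q = (a, b, k)"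
    by (metis prod_cases3)
  from assms(1,2) q consider "b2 - b1 - k1*(a2 - a1) \<noteq> 0" | "b1 - b2 - k2*(a1 - a2) \<noteq> 0"
    using sigma_inter_nonempty_imp_off_line by blast
  then show ?thesis
  proof cases
    case 1
    from sigma_inter_subset_imp_eq[OF 1] assms(3) q show ?thesis by auto
  next
    case 2
    from sigma_inter_subset_imp_eq[OF 2] assms(3) q show ?thesis by (auto simp: Int_commute)
  qed
qed

end
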